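(* Let $(\mathcal G,\lambda)$ be a small morphism-colored groupoid satisfying the inverse-compatibility condition. If $g,f_1,f_2\in\mathrm{Mor}(\mathcal G)$, with $(f_1,f_2)$ composable, satisfy $(s_1\circ\lambda_1)(g)=(s_1\circ\lambda_1)(f_1\circ f_2)$, then there exist composable $g_1,g_2\in\mathrm{Mor}(\mathcal G)$ with $g=g_1\circ g_2$, $(s_1\circ\lambda_1)(g_1)=(s_1\circ\lambda_1)(f_1)$ and $(s_1\circ\lambda_1)(g_2)=(s_1\circ\lambda_1)(f_2)$. In other words, $(\mathcal G,s_1\circ\lambda_1)$ is a morphism-colored category.
   Context: A morphism-colored category is a pair $(\mathcal C,\lambda)$ where $\mathcal C$ is a category and $\lambda$ assigns to each morphism $f$ a color $\lambda(f)$, such that: whenever $g,f_1,f_2$ with $(f_1,f_2)$ composable satisfy $\lambda(g)=\lambda(f_1\circ f_2)$, there exist composable $g_1,g_2$ with $g=g_1\circ g_2$, $\lambda(g_1)=\lambda(f_1)$, $\lambda(g_2)=\lambda(f_2)$. It is a morphism-colored groupoid if $\mathcal C$ is a groupoid, and small if $\mathcal C$ is small and $\lambda$ is a map into a set. Inverse-compatibility: $\lambda(f)=\lambda(g)$ implies $\lambda(f^{-1})=\lambda(g^{-1})$. $I_1=\lambda(\mathrm{Mor}(\mathcal G))$, $\lambda_1:\mathrm{Mor}(\mathcal G)\to I_1$ the corestriction of $\lambda$. The equivalence relation $\overset{1}{\sim}$ on $I_1$: $\lambda(f_1\circ\cdots\circ f_l)\overset{1}{\sim}\lambda(g_1\circ\cdots\circ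 g_l)$ for every $l\ge1$ and all composable sequences $(f_1,\dots,f_l)$, $(g_1,\dots,g_l)$ with $\lambda(f_i)=\lambda(g_i)$ for all $i$ (no other pairs). $s_1:I_1\to\bar I_1$ is the quotient map onto the set $\bar I_1$ of equivalence classes. *)

theory Defs
  imports Main
begin

text \<open>A small category, given explicitly by its set of objects, set of morphisms,
  domain, codomain, composition and identities.  comp f g is f after g, defined
  (composable) when dom f = cod g.\<close>

record ('o, 'm) cat =
  Ob :: "'o set"
  Mor :: "'m set"
  dom :: "'m \<Rightarrow> 'o"
  cod :: "'m \<Rightarrow> 'o"
  comp :: "'m \<Rightarrow> 'm \<Rightarrow> 'm"
  ident :: "'o \<Rightarrow> 'm"

definition composable :: "('o, 'm, 'x) cat_scheme \<Rightarrow> 'm \<Rightarrow> 'm \<Rightarrow> bool" where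
  "composable C f g \<longleftrightarrow> f \<in> Mor C \<and> g \<in> Mor C \<and> dom C f = cod C g"

definition category :: "('o, 'm, 'x) cat_scheme \<Rightarrow> bool" where
  "category C \<longleftrightarrow>
     (\<forall>f\<in>Mor C. dom C f \<in> Ob C \<and> cod C f \<in> Ob C) \<and>
     (\<forall>a\<in>Ob C. ident C a \<in> Mor C \<and> dom C (ident C a) = a \<and> cod C (ident C a) = a) \<and>
     (\<forall>f g. composable C f g \<longrightarrow>
        comp C f g \<in> Mor C \<and> dom C (comp C f g) = dom C g \<and> cod C (comp C f g) = cod C f) \<and>
     (\<forall>f\<in>Mor C. comp C (ident C (cod C f)) f = f \<and> comp C f (ident C (dom C f)) = f) \<and>
     (\<forall>f g h. composable C f g \<longrightarrow> composable C g h \<longrightarrow>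
        comp C (comp C f g) h = comp C f (comp C g h))"

definition is_inverse :: "('o, 'm, 'x) cat_scheme \<Rightarrow> 'm \<Rightarrow> 'm \<Rightarrow> bool" where
  "is_inverse C f g \<longleftrightarrow> g \<in> Mor C \<and> dom C g = cod C f \<and> cod C g = dom C f \<and>
     comp C g f = ident C (dom C f) \<and> comp C f g = ident C (cod C f)"

definition groupoid :: "('o, 'm, 'x) cat_scheme \<Rightarrow> bool" where
  "groupoid C \<longleftrightarrow> category C \<and> (\<forall>f\<in>Mor C. \<exists>g. is_inverse C f g)"

definition ginv :: "('o, 'm, 'x) cat_scheme \<Rightarrow> 'm \<Rightarrow> 'm" where
  "ginv C f = (THE g. is_inverse C f g)"

text \<open>Morphism-colored category: colorings are arbitrary maps from morphisms into a type
  (i.e. into a set), only their values on Mor C matter.\<close>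
definition morph_colored :: "('o, 'm, 'x) cat_scheme \<Rightarrow> ('m \<Rightarrow> 'c) \<Rightarrow> bool" where
  "morph_colored C col \<longleftrightarrow> category C \<and>
     (\<forall>g f1 f2. g \<in> Mor C \<longrightarrow> composable C f1 f2 \<longrightarrow> col g = col (comp C f1 f2) \<longrightarrow>
        (\<exists>g1 g2. composable C g1 g2 \<and> g = comp C g1 g2 \<and> col g1 = col f1 \<and> col g2 = col f2))"

definition morph_colored_groupoid :: "('o, 'm, 'x) cat_scheme \<Rightarrow> ('m \<Rightarrow> 'c) \<Rightarrow> bool" where
  "morph_colored_groupoid C col \<longleftrightarrow> morph_colored C col \<and> groupoid C"

definition inverse_compatible :: "('o, 'm, 'x) cat_scheme \<Rightarrow> ('m \<Rightarrow> 'c) \<Rightarrow> bool" where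
  "inverse_compatible C col \<longleftrightarrow>
     (\<forall>f\<in>Mor C. \<forall>g\<in>Mor C. col f = col g \<longrightarrow> col (ginv C f) = col (ginv C g))"

definition composable_seq :: "('o, 'm, 'x) cat_scheme \<Rightarrow> 'm list \<Rightarrow> bool" where
  "composable_seq C fs \<longleftrightarrow> fs \<noteq> [] \<and> set fs \<subseteq> Mor C \<and>
     (\<forall>i. Suc i < length fs \<longrightarrow> dom C (fs ! i) = cod C (fs ! Suc i))"

fun comp_list :: "('o, 'm, 'x) cat_scheme \<Rightarrow> 'm list \<Rightarrow> 'm" where
  "comp_list C [] = undefined"
| "comp_list C [f] = f"
| "comp_list C (f # g # fs) = comp C f (comp_list C (g # fs))"

definition I1 :: "('o, 'm, 'x) cat_scheme \<Rightarrow> ('m \<Rightarrow> 'c) \<Rightarrow> 'c set" where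
  "I1 C col = col ` Mor C"

definition rel1 :: "('o, 'm, 'x) cat_scheme \<Rightarrow> ('m \<Rightarrow> 'c) \<Rightarrow> ('c \<times> 'c) set" where
  "rel1 C col = {(col (comp_list C fs), col (comp_list C gs)) | fs gs.
      composable_seq C fs \<and> composable_seq C gs \<and> length fs = length gs \<and>
      (\<forall>i < length fs. col (fs ! i) = col (gs ! i))}"

definition barI1 :: "('o, 'm, 'x) cat_scheme \<Rightarrow> ('m \<Rightarrow> 'c) \<Rightarrow> 'c set set" where
  "barI1 C col = I1 C col // rel1 C col"

definition s1 :: "('o, 'm, 'x) cat_scheme \<Rightarrow> ('m \<Rightarrow> 'c) \<Rightarrow> 'c \<Rightarrow> 'c set" where
  "s1 C col i = rel1 C col `` {i}"

end

theory Submission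
  imports Defs
begin

text \<open>
  In a morph-colored category every morphism with the color of a composite f1 \<circ> ... \<circ> fl
  factors as g1 \<circ> ... \<circ> gl with colorwise equal factors. In a groupoid this makes ~1
  transitive: given witnesses xs ~ ys and zs ~ ws with col(ys) = col(zs), realize the middle
  color by some t ending where xs ends and by some u starting where ws starts, factor t along
  ys and zs and u along ys, and pad xs on the left by t t\<inverse> and ws on the right by u\<inverse> u.
  Both padded sequences then have the color sequence of zs, of the reversed inverses of ys, and
  of ys; inverse compatibility is what makes the colors of the inverted factors agree. So ~1 is
  an equivalence on I1 and s1 is its quotient map.

  If now s1 (col g) = s1 (col (f1 f2)), factor g and f1 f2 along a witnessing pair. Their last
  factors h and k have the same color and k = (k f2\<inverse>) f2, so h = b1 b2 with col b2 = col f2;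
  the sequences ending in b1 and in k f2\<inverse> compose to g1 and f1 and witness g1 ~1 f1.
\<close>

lemma not_composable_seq_Nil [simp]: "\<not> composable_seq C []"
  by (simp add: composable_seq_def)

lemma composable_seq_singleton [simp]: "composable_seq C [f] \<longleftrightarrow> f \<in> Mor C"
  by (simp add: composable_seq_def)

lemma composable_seq_Cons_Cons [simp]:
  "composable_seq C (f # g # fs) \<longleftrightarrow>
     f \<in> Mor C \<and> dom C f = cod C g \<and> composable_seq C (g # fs)"
  unfolding composable_seq_def by (auto simp: less_Suc_eq_0_disj)

lemma composable_seq_append:
  assumes "xs \<noteq> []" and "ys \<noteq> []"
  shows "composable_seq C (xs @ ys) \<longleftrightarrow>
    composable_seq C xs \<and> composable_seq C ys \<and> dom C (last xs) = cod C (hd ys)"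
  using assms
proof (induction xs rule: induct_list012)
  case (2 x)
  then show ?case by (cases ys) auto
qed auto

lemma composable_seq_appendI:
  "composable_seq C xs \<Longrightarrow> composable_seq C ys \<Longrightarrow> dom C (last xs) = cod C (hd ys) \<Longrightarrow>
    composable_seq C (xs @ ys)"
  by (metis composable_seq_append not_composable_seq_Nil)

lemma composable_seq_snoc:
  "composable_seq C (xs @ [x]) \<longleftrightarrow>
    x \<in> Mor C \<and> (xs = [] \<or> composable_seq C xs \<and> dom C (last xs) = cod C x)"
  by (cases "xs = []") (auto simp: composable_seq_append)

locale small_category =
  fixes C :: "('o, 'm, 'x) cat_scheme"
  assumes category: "category C"
begin

lemma
  assumes "f \<in> Mor C" and "g \<in> Mor C" and "dom C f = cod C g"
  shows comp_in_Mor [simp]: "comp C f g \<in> Mor C"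
    and dom_comp [simp]: "dom C (comp C f g) = dom C g"
    and cod_comp [simp]: "cod C (comp C f g) = cod C f"
  using assms category unfolding category_def composable_def by blast+

lemma comp_assoc:
  assumes "f \<in> Mor C" "g \<in> Mor C" "h \<in> Mor C" "dom C f = cod C g" "dom C g = cod C h"
  shows "comp C (comp C f g) h = comp C f (comp C g h)"
  using assms category unfolding category_def composable_def by blast

lemma comp_ident_left [simp]: "f \<in> Mor C \<Longrightarrow> cod C f = a \<Longrightarrow> comp C (ident C a) f = f"
  and comp_ident_right [simp]: "f \<in> Mor C \<Longrightarrow> dom C f = a \<Longrightarrow> comp C f (ident C a) = f"
  using category unfolding category_def by blast+

lemma comp_list_closed:
  assumes "composable_seq C fs"
  shows "comp_list C fs \<in> Mor C \<and> dom C (comp_list C fs) = dom C (last fs) \<and>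
    cod C (comp_list C fs) = cod C (hd fs)"
  using assms by (induction fs rule: induct_list012) auto

lemma
  assumes "composable_seq C fs"
  shows comp_list_in_Mor [simp]: "comp_list C fs \<in> Mor C"
    and dom_comp_list: "dom C (comp_list C fs) = dom C (last fs)"
    and cod_comp_list: "cod C (comp_list C fs) = cod C (hd fs)"
  using comp_list_closed[OF assms] by blast+

lemma comp_list_append:
  assumes "composable_seq C xs" and "composable_seq C ys" and "dom C (last xs) = cod C (hd ys)"
  shows "comp_list C (xs @ ys) = comp C (comp_list C xs) (comp_list C ys)"
  using assms
proof (induction xs rule: induct_list012)
  case (2 x)
  then show ?case by (cases ys) auto
next
  case (3 x y zs)
  have "comp_list C ((y # zs) @ ys) = comp C (comp_list C (y # zs)) (comp_list C ys)"
    using "3.IH"(2) "3.prems" by (simp del: append_Cons)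
  then show ?case
    using "3.prems" comp_assoc[of x "comp_list C (y # zs)" "comp_list C ys"]
    by (simp add: dom_comp_list cod_comp_list)
qed auto

lemma
  assumes xs: "composable_seq C (xs @ [x])" and y: "y \<in> Mor C" and xy: "dom C x = cod C y"
  shows composable_seq_snoc_comp: "composable_seq C (xs @ [comp C x y])"
    and comp_list_snoc_comp: "comp_list C (xs @ [comp C x y]) = comp C (comp_list C (xs @ [x])) y"
proof -
  have x: "x \<in> Mor C" using xs by (simp add: composable_seq_snoc)
  show "composable_seq C (xs @ [comp C x y])"
    using xs x y xy by (simp add: composable_seq_snoc)
  show "comp_list C (xs @ [comp C x y]) = comp C (comp_list C (xs @ [x])) y"
  proof (cases "xs = []")
    case False
    then have "composable_seq C xs" and "dom C (last xs) = cod C x"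
      using xs by (simp_all add: composable_seq_snoc)
    then show ?thesis
      using x y xy comp_assoc[of "comp_list C xs" x y]
      by (simp add: comp_list_append dom_comp_list)
  qed simp
qed

end

locale small_groupoid = small_category +
  assumes has_inverse: "f \<in> Mor C \<Longrightarrow> \<exists>g. is_inverse C f g"
begin

lemma inverse_unique:
  assumes f: "f \<in> Mor C" and g: "is_inverse C f g" and h: "is_inverse C f h"
  shows "g = h"
proof -
  have "g = comp C g (comp C f h)"
    using g h by (simp add: is_inverse_def)
  also have "\<dots> = comp C (comp C g f) h"
    using f g h by (intro comp_assoc[symmetric]) (auto simp: is_inverse_def)
  also have "\<dots> = h"
    using g h by (simp add: is_inverse_def)
  finally show ?thesis .
qed

lemma is_inverse_ginv: "f \<in> Mor C \<Longrightarrow> is_inverse C f (ginv C f)"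
  unfolding ginv_def by (metis has_inverse inverse_unique theI)

lemma ginv_eqI: "f \<in> Mor C \<Longrightarrow> is_inverse C f g \<Longrightarrow> ginv C f = g"
  using inverse_unique is_inverse_ginv by blast

lemma
  assumes "f \<in> Mor C"
  shows ginv_in_Mor [simp]: "ginv C f \<in> Mor C"
    and dom_ginv [simp]: "dom C (ginv C f) = cod C f"
    and cod_ginv [simp]: "cod C (ginv C f) = dom C f"
    and comp_ginv_left [simp]: "comp C (ginv C f) f = ident C (dom C f)"
    and comp_ginv_right [simp]: "comp C f (ginv C f) = ident C (cod C f)"
  using is_inverse_ginv[OF assms] unfolding is_inverse_def by blast+

lemma ginv_ginv [simp]: "f \<in> Mor C \<Longrightarrow> ginv C (ginv C f) = f"
  by (rule ginv_eqI) (simp_all add: is_inverse_def)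

lemma comp_cancel_right:
  "f \<in> Mor C \<Longrightarrow> g \<in> Mor C \<Longrightarrow> dom C f = cod C g \<Longrightarrow> comp C (comp C f g) (ginv C g) = f"
  by (simp add: comp_assoc)

lemma comp_ginv_cancel_right:
  "f \<in> Mor C \<Longrightarrow> g \<in> Mor C \<Longrightarrow> dom C f = dom C g \<Longrightarrow> comp C (comp C f (ginv C g)) g = f"
  by (simp add: comp_assoc)

lemma comp_cancel_left:
  "f \<in> Mor C \<Longrightarrow> g \<in> Mor C \<Longrightarrow> cod C f = cod C g \<Longrightarrow> comp C f (comp C (ginv C f) g) = g"
  by (simp add: comp_assoc[symmetric])

lemma ginv_comp:
  assumes f: "f \<in> Mor C" and g: "g \<in> Mor C" and fg: "dom C f = cod C g"
  shows "ginv C (comp C f g) = comp C (ginv C g) (ginv C f)"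
proof (rule ginv_eqI)
  have "comp C (comp C (ginv C g) (ginv C f)) (comp C f g) = comp C (ginv C g) g"
    using f g fg comp_cancel_left[of "ginv C f" g]
    by (simp add: comp_assoc[of "ginv C g" "ginv C f" "comp C f g"] comp_assoc[of "ginv C f" f g, symmetric])
  moreover have "comp C (comp C f g) (comp C (ginv C g) (ginv C f)) = comp C f (ginv C f)"
    using f g fg comp_cancel_right[of f g]
    by (simp add: comp_assoc[of "comp C f g" "ginv C g" "ginv C f", symmetric])
  ultimately show "is_inverse C (comp C f g) (comp C (ginv C g) (ginv C f))"
    using f g fg by (simp add: is_inverse_def)
qed (use f g fg in simp)

lemma rev_ginv_seq:
  assumes "composable_seq C fs"
  shows "composable_seq C (rev (map (ginv C) fs)) \<and>
    comp_list C (rev (map (ginv C) fs)) = ginv C (comp_list C fs)"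
  using assms
proof (induction fs rule: induct_list012)
  case (3 x y zs)
  define R where "R = comp_list C (y # zs)"
  define IR where "IR = rev (map (ginv C) (y # zs))"
  have x: "x \<in> Mor C" "dom C x = cod C y" and R: "composable_seq C (y # zs)"
    using "3.prems" by auto
  have IR: "composable_seq C IR" "comp_list C IR = ginv C R"
    using "3.IH"(2) R unfolding R_def IR_def by auto
  have "dom C (last IR) = cod C (hd [ginv C x])"
    using IR R x by (simp add: dom_comp_list[symmetric] R_def cod_comp_list)
  then have "composable_seq C (IR @ [ginv C x]) \<and>
      comp_list C (IR @ [ginv C x]) = comp C (ginv C R) (ginv C x)"
    using IR x by (simp add: composable_seq_snoc comp_list_append)
  moreover have "comp C (ginv C R) (ginv C x) = ginv C (comp C x R)"
    using x R by (simp add: ginv_comp R_def cod_comp_list)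
  ultimately show ?case
    by (simp add: IR_def R_def)
qed auto

lemma comp_list_append_rev_ginv:
  assumes A: "composable_seq C A" and B: "composable_seq C B" and Z: "composable_seq C Z"
    and AB: "dom C (comp_list C A) = dom C (comp_list C B)"
    and BZ: "cod C (comp_list C B) = cod C (comp_list C Z)"
  shows "composable_seq C (A @ rev (map (ginv C) B) @ Z) \<and>
    comp_list C (A @ rev (map (ginv C) B) @ Z) =
      comp C (comp_list C A) (comp C (ginv C (comp_list C B)) (comp_list C Z))"
proof -
  define IB where "IB = rev (map (ginv C) B)"
  have IB: "composable_seq C IB" "comp_list C IB = ginv C (comp_list C B)"
    using rev_ginv_seq[OF B] unfolding IB_def by auto
  have "dom C (last IB) = cod C (hd Z)"
    using IB B Z BZ by (simp add: dom_comp_list[symmetric] cod_comp_list[symmetric])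
  then have IBZ: "composable_seq C (IB @ Z)"
      "comp_list C (IB @ Z) = comp C (ginv C (comp_list C B)) (comp_list C Z)"
    using IB Z by (simp_all add: composable_seq_appendI comp_list_append)
  have "hd (IB @ Z) = hd IB"
    using IB(1) by (cases IB) auto
  then have "dom C (last A) = cod C (hd (IB @ Z))"
    using A B IB AB by (simp add: dom_comp_list[symmetric] cod_comp_list[symmetric])
  then show ?thesis
    using A IBZ by (simp add: composable_seq_appendI comp_list_append IB_def[symmetric])
qed

end

lemma rel1_iff:
  "(a, b) \<in> rel1 C col \<longleftrightarrow> (\<exists>fs gs. composable_seq C fs \<and> composable_seq C gs \<and>
     map col fs = map col gs \<and> a = col (comp_list C fs) \<and> b = col (comp_list C gs))"
proof -
  have "map col fs = map col gs \<longleftrightarrow>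
      length fs = length gs \<and> (\<forall>i < length fs. col (fs ! i) = col (gs ! i))" for fs gs
    by (auto simp: list_eq_iff_nth_eq)
  then show ?thesis
    unfolding rel1_def by blast
qed

lemma rel1I:
  "composable_seq C fs \<Longrightarrow> composable_seq C gs \<Longrightarrow> map col fs = map col gs \<Longrightarrow>
    (col (comp_list C fs), col (comp_list C gs)) \<in> rel1 C col"
  unfolding rel1_iff by blast

locale colored_category = small_category +
  fixes col :: "'m \<Rightarrow> 'c"
  assumes color_split: "g \<in> Mor C \<Longrightarrow> composable C f1 f2 \<Longrightarrow> col g = col (comp C f1 f2) \<Longrightarrow>
    \<exists>g1 g2. composable C g1 g2 \<and> g = comp C g1 g2 \<and> col g1 = col f1 \<and> col g2 = col f2"
begin

lemma factor_along_colors: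
  assumes "composable_seq C fs" and "h \<in> Mor C" and "col h = col (comp_list C fs)"
  shows "\<exists>hs. composable_seq C hs \<and> map col hs = map col fs \<and> comp_list C hs = h"
  using assms
proof (induction fs arbitrary: h rule: induct_list012)
  case (2 f)
  then show ?case by (intro exI[of _ "[h]"]) simp
next
  case (3 f g zs)
  have "composable C f (comp_list C (g # zs))"
    using "3.prems"(1) by (simp add: composable_def cod_comp_list)
  then obtain h1 h2 where h: "composable C h1 h2" "h = comp C h1 h2"
    and col_h: "col h1 = col f" "col h2 = col (comp_list C (g # zs))"
    using color_split "3.prems" by fastforce
  then obtain hs where hs: "composable_seq C hs" "map col hs = map col (g # zs)" "comp_list C hs = h2"
    using "3.IH"(2) "3.prems"(1) h(1) unfolding composable_def by (metis composable_seq_Cons_Cons)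
  then obtain h' hs' where hs': "hs = h' # hs'"
    by (cases hs) auto
  have "composable_seq C (h1 # hs) \<and> comp_list C (h1 # hs) = h"
    using hs hs' h cod_comp_list[OF hs(1)] by (auto simp: composable_def)
  with hs col_h show ?case
    by (intro exI[of _ "h1 # hs"]) simp
qed simp

end

locale colored_groupoid = colored_category C col + small_groupoid C
  for C :: "('o, 'm, 'x) cat_scheme" and col :: "'m \<Rightarrow> 'c"
begin

lemma color_realized_at_cod:
  assumes x: "x \<in> Mor C" and y: "y \<in> Mor C" and h: "h \<in> Mor C"
    and xy: "col x = col y" and yh: "dom C y = cod C h"
  shows "\<exists>e\<in>Mor C. col e = col (comp C y h) \<and> cod C e = cod C x"
proof -
  have "composable C (comp C y h) (ginv C h)" and "col x = col (comp C (comp C y h) (ginv C h))"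
    using x y h xy yh by (simp_all add: composable_def comp_cancel_right)
  then obtain e1 e2 where "composable C e1 e2" "x = comp C e1 e2" "col e1 = col (comp C y h)"
    using color_split x by blast
  then show ?thesis
    by (intro bexI[of _ e1]) (auto simp: composable_def)
qed

lemma color_comp_list_realized_at_cod:
  assumes xs: "composable_seq C xs" and ys: "composable_seq C ys" and m: "map col xs = map col ys"
  shows "\<exists>e\<in>Mor C. col e = col (comp_list C ys) \<and> cod C e = cod C (comp_list C xs)"
proof -
  obtain x xs' y ys' where xx: "xs = x # xs'" and yy: "ys = y # ys'"
    using xs ys by (cases xs; cases ys) auto
  have x: "x \<in> Mor C" and y: "y \<in> Mor C" and "col x = col y"
    using xs ys m xx yy by (auto simp: composable_seq_def)
  moreover have cod_xs: "cod C (comp_list C xs) = cod C x"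
    using xs xx by (simp add: cod_comp_list)
  ultimately show ?thesis
  proof (cases ys')
    case Nil
    then show ?thesis
      using m xx yy x cod_xs \<open>col x = col y\<close> by auto
  next
    case (Cons y' zs)
    then have "composable_seq C ys'" "dom C y = cod C (comp_list C ys')"
      and "comp_list C ys = comp C y (comp_list C ys')"
      using ys yy by (simp_all add: cod_comp_list)
    then show ?thesis
      using color_realized_at_cod[OF x y _ \<open>col x = col y\<close>] cod_xs by auto
  qed
qed

lemma split_last_factor:
  assumes hs: "composable_seq C hs" and ks: "composable_seq C ks" and m: "map col hs = map col ks"
    and f: "composable C f1 f2" and k: "comp_list C ks = comp C f1 f2"
  obtains g1 g2 where "composable C g1 g2" and "comp_list C hs = comp C g1 g2"
    and "(col g1, col f1) \<in> rel1 C col" and "col g2 = col f2"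
proof -
  obtain hs0 hl where hh: "hs = hs0 @ [hl]"
    using hs by (cases hs rule: rev_cases) auto
  obtain ks0 kl where kk: "ks = ks0 @ [kl]"
    using ks by (cases ks rule: rev_cases) auto
  have m0: "map col hs0 = map col ks0" and "col hl = col kl"
    using m hh kk by simp_all
  have f1: "f1 \<in> Mor C" and f2: "f2 \<in> Mor C" and f12: "dom C f1 = cod C f2"
    using f by (simp_all add: composable_def)
  have hl: "hl \<in> Mor C" and kl: "kl \<in> Mor C"
    using hs ks hh kk by (simp_all add: composable_seq_snoc)
  have "dom C kl = dom C f2"
    using dom_comp_list[OF ks] k kk f1 f2 f12 by simp
  define a where "a = comp C kl (ginv C f2)"
  have "composable C a f2" and "col hl = col (comp C a f2)"
    using kl f2 \<open>dom C kl = dom C f2\<close> \<open>col hl = col kl\<close>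
    by (simp_all add: a_def composable_def comp_ginv_cancel_right)
  then obtain b1 b2 where b: "composable C b1 b2" "hl = comp C b1 b2"
    and col_b: "col b1 = col a" "col b2 = col f2"
    using color_split hl by blast
  have hs1: "composable_seq C (hs0 @ [b1])"
    using hs hh b by (auto simp: composable_seq_snoc composable_def)
  have hs_split: "comp_list C hs = comp C (comp_list C (hs0 @ [b1])) b2"
    using comp_list_snoc_comp[OF hs1] b hh by (simp add: composable_def)
  have ks1: "composable_seq C (ks0 @ [a])"
    using composable_seq_snoc_comp[of ks0 kl "ginv C f2"] ks kk f2 \<open>dom C kl = dom C f2\<close>
    by (simp add: a_def)
  moreover have "comp_list C (ks0 @ [a]) = f1"
    using comp_list_snoc_comp[of ks0 kl "ginv C f2"] ks kk k f1 f2 f12 \<open>dom C kl = dom C f2\<close>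
    by (simp add: a_def comp_cancel_right)
  moreover have "map col (hs0 @ [b1]) = map col (ks0 @ [a])"
    using m0 col_b by simp
  ultimately have "(col (comp_list C (hs0 @ [b1])), col f1) \<in> rel1 C col"
    using rel1I[OF hs1] by metis
  moreover have "composable C (comp_list C (hs0 @ [b1])) b2"
    using hs1 b(1) by (simp add: composable_def dom_comp_list)
  ultimately show ?thesis
    using that hs_split col_b(2) by blast
qed

end

locale compatible_colored_groupoid = colored_groupoid +
  assumes color_ginv: "f \<in> Mor C \<Longrightarrow> g \<in> Mor C \<Longrightarrow> col f = col g \<Longrightarrow> col (ginv C f) = col (ginv C g)"
begin

lemma map_color_ginv:
  "set fs \<subseteq> Mor C \<Longrightarrow> set gs \<subseteq> Mor C \<Longrightarrow> map col fs = map col gs \<Longrightarrow>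
    map (col \<circ> ginv C) fs = map (col \<circ> ginv C) gs"
  by (induction fs gs rule: list_induct2') (auto intro: color_ginv)

lemma color_comp_list_realized_at_dom:
  assumes xs: "composable_seq C xs" and ys: "composable_seq C ys" and m: "map col xs = map col ys"
  shows "\<exists>e\<in>Mor C. col e = col (comp_list C ys) \<and> dom C e = dom C (comp_list C xs)"
proof -
  have "map col (rev (map (ginv C) xs)) = map col (rev (map (ginv C) ys))"
    using map_color_ginv[of xs ys] xs ys m by (simp add: composable_seq_def rev_map[symmetric])
  then obtain e where e: "e \<in> Mor C" "col e = col (ginv C (comp_list C ys))"
    and "cod C e = cod C (ginv C (comp_list C xs))"
    using color_comp_list_realized_at_cod rev_ginv_seq[OF xs] rev_ginv_seq[OF ys] by metis
  then have "dom C (ginv C e) = dom C (comp_list C xs)"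
    using xs by simp
  moreover have "col (ginv C e) = col (comp_list C ys)"
    using color_ginv[OF e(1) _ e(2)] ys by simp
  ultimately show ?thesis
    using e(1) by (intro bexI[of _ "ginv C e"]) simp_all
qed

lemma pad_left:
  assumes xs: "composable_seq C xs" and ys: "composable_seq C ys" and m: "map col xs = map col ys"
    and zs: "composable_seq C zs" and zy: "col (comp_list C zs) = col (comp_list C ys)"
  obtains L where "composable_seq C (L @ xs)" and "comp_list C (L @ xs) = comp_list C xs"
    and "map col L = map col zs @ rev (map (col \<circ> ginv C) ys)"
proof -
  obtain t where t: "t \<in> Mor C" "col t = col (comp_list C ys)" "cod C t = cod C (comp_list C xs)"
    using color_comp_list_realized_at_cod[OF xs ys m] by blast
  obtain ts where ts: "composable_seq C ts" "map col ts = map col ys" "comp_list C ts = t"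
    using factor_along_colors[OF ys t(1,2)] by blast
  obtain ts' where ts': "composable_seq C ts'" "map col ts' = map col zs" "comp_list C ts' = t"
    using factor_along_colors[OF zs t(1)] t(2) zy by auto
  have "composable_seq C (ts' @ rev (map (ginv C) ts) @ xs) \<and>
      comp_list C (ts' @ rev (map (ginv C) ts) @ xs) = comp C t (comp C (ginv C t) (comp_list C xs))"
    using comp_list_append_rev_ginv[OF ts'(1) ts(1) xs] ts ts' t by simp
  moreover have "comp C t (comp C (ginv C t) (comp_list C xs)) = comp_list C xs"
    using t xs by (simp add: comp_cancel_left)
  moreover have "map (col \<circ> ginv C) ts = map (col \<circ> ginv C) ys"
    using map_color_ginv ts ys by (simp add: composable_seq_def)
  ultimately show ?thesis
    using ts' by (intro that[of "ts' @ rev (map (ginv C) ts)"]) (simp_all add: rev_map[symmetric])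
qed

lemma pad_right:
  assumes ws: "composable_seq C ws" and zs: "composable_seq C zs" and m: "map col ws = map col zs"
    and ys: "composable_seq C ys" and yz: "col (comp_list C ys) = col (comp_list C zs)"
  obtains R where "composable_seq C (ws @ R)" and "comp_list C (ws @ R) = comp_list C ws"
    and "map col R = rev (map (col \<circ> ginv C) ys) @ map col ys"
proof -
  obtain u where u: "u \<in> Mor C" "col u = col (comp_list C zs)" "dom C u = dom C (comp_list C ws)"
    using color_comp_list_realized_at_dom[OF ws zs m] by blast
  obtain us where us: "composable_seq C us" "map col us = map col ys" "comp_list C us = u"
    using factor_along_colors[OF ys u(1)] u(2) yz by auto
  have "composable_seq C (ws @ rev (map (ginv C) us) @ us) \<and>
      comp_list C (ws @ rev (map (ginv C) us) @ us) = comp C (comp_list C ws) (comp C (ginv C u) u)"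
    using comp_list_append_rev_ginv[OF ws us(1) us(1)] us u by simp
  moreover have "comp C (comp_list C ws) (comp C (ginv C u) u) = comp_list C ws"
    using u ws by simp
  moreover have "map (col \<circ> ginv C) us = map (col \<circ> ginv C) ys"
    using map_color_ginv us ys by (simp add: composable_seq_def)
  ultimately show ?thesis
    using us by (intro that[of "rev (map (ginv C) us) @ us"]) (simp_all add: rev_map[symmetric])
qed

lemma rel1_trans:
  assumes "(p, q) \<in> rel1 C col" and "(q, r) \<in> rel1 C col"
  shows "(p, r) \<in> rel1 C col"
proof -
  obtain xs ys where xs: "composable_seq C xs" and ys: "composable_seq C ys"
    and mxy: "map col xs = map col ys" and p: "p = col (comp_list C xs)" and q: "q = col (comp_list C ys)"
    using assms(1) unfolding rel1_iff by blast
  obtain zs ws where zs: "composable_seq C zs" and ws: "composable_seq C ws"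
    and mzw: "map col zs = map col ws" and q': "q = col (comp_list C zs)" and r: "r = col (comp_list C ws)"
    using assms(2) unfolding rel1_iff by blast
  obtain L where L: "composable_seq C (L @ xs)" "comp_list C (L @ xs) = comp_list C xs"
    "map col L = map col zs @ rev (map (col \<circ> ginv C) ys)"
    using pad_left[OF xs ys mxy zs] q q' by metis
  obtain R where R: "composable_seq C (ws @ R)" "comp_list C (ws @ R) = comp_list C ws"
    "map col R = rev (map (col \<circ> ginv C) ys) @ map col ys"
    using pad_right[OF ws zs mzw[symmetric] ys] q q' by metis
  have "map col (L @ xs) = map col (ws @ R)"
    using L(3) R(3) mxy mzw by simp
  then show ?thesis
    using rel1I[OF L(1) R(1)] L(2) R(2) p r by simp
qed

lemma equiv_rel1: "equiv (I1 C col) (rel1 C col)"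
proof (rule equivI)
  show "rel1 C col \<subseteq> I1 C col \<times> I1 C col"
    by (auto simp: rel1_iff I1_def)
  show "refl_on (I1 C col) (rel1 C col)"
    unfolding refl_on_def I1_def using rel1I[of C "[f]" "[f]" col for f] by auto
  show "sym (rel1 C col)"
    unfolding sym_def rel1_iff by metis
  show "trans (rel1 C col)"
    unfolding trans_def using rel1_trans by blast
qed

lemma s1_eq_iff_rel1:
  "f \<in> Mor C \<Longrightarrow> g \<in> Mor C \<Longrightarrow> s1 C col (col f) = s1 C col (col g) \<longleftrightarrow> (col f, col g) \<in> rel1 C col"
  unfolding s1_def using eq_equiv_class_iff[OF equiv_rel1] by (simp add: I1_def)

lemma rel1_split:
  assumes g: "g \<in> Mor C" and f: "composable C f1 f2" and gf: "(col g, col (comp C f1 f2)) \<in> rel1 C col"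
  obtains g1 g2 where "composable C g1 g2" and "g = comp C g1 g2"
    and "(col g1, col f1) \<in> rel1 C col" and "col g2 = col f2"
proof -
  obtain gs fs where gs: "composable_seq C gs" and fs: "composable_seq C fs"
    and m: "map col gs = map col fs"
    and "col g = col (comp_list C gs)" and "col (comp C f1 f2) = col (comp_list C fs)"
    using gf unfolding rel1_iff by blast
  moreover have "comp C f1 f2 \<in> Mor C"
    using f by (simp add: composable_def)
  ultimately obtain hs ks where "composable_seq C hs" "map col hs = map col gs" "comp_list C hs = g"
    and "composable_seq C ks" "map col ks = map col fs" "comp_list C ks = comp C f1 f2"
    using factor_along_colors g by metis
  then show ?thesis
    using split_last_factor[of hs ks f1 f2] that m f by metis
qed

end

theorem mainTheorem6:
  fixes C :: "('o, 'm) cat" and col :: "'m \<Rightarrow> 'c"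
  assumes "morph_colored_groupoid C col"
    and "inverse_compatible C col"
  shows "morph_colored C (s1 C col \<circ> col)"
proof -
  interpret compatible_colored_groupoid C col
    using assms unfolding morph_colored_groupoid_def morph_colored_def groupoid_def
      inverse_compatible_def by unfold_locales blast+
  have "\<exists>g1 g2. composable C g1 g2 \<and> g = comp C g1 g2 \<and>
      s1 C col (col g1) = s1 C col (col f1) \<and> s1 C col (col g2) = s1 C col (col f2)"
    if g: "g \<in> Mor C" and f: "composable C f1 f2"
      and "s1 C col (col g) = s1 C col (col (comp C f1 f2))" for g f1 f2
  proof -
    have "(col g, col (comp C f1 f2)) \<in> rel1 C col"
      using that s1_eq_iff_rel1 by (simp add: composable_def)
    then obtain g1 g2 where "composable C g1 g2" "g = comp C g1 g2"
      "(col g1, col f1) \<in> rel1 C col" "col g2 = col f2"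
      using rel1_split[OF g f] by blast
    moreover have "g1 \<in> Mor C" and "f1 \<in> Mor C"
      using \<open>composable C g1 g2\<close> f by (simp_all add: composable_def)
    ultimately show ?thesis
      using s1_eq_iff_rel1 by metis
  qed
  then show ?thesis
    unfolding morph_colored_def using category by simp
qed

end
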